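(* Let $X$ be a real linear space, $T$ an infinite index set, and $f, f_t : X \to \overline{\mathbb{R}} := \mathbb{R}\cup\{\pm\infty\}$ ($t \in T$) convex proper functions. Consider the problem $(P)$: minimize $f(x)$ subject to $f_t(x)\le 0$ for all $t\in T$, with optimal value $\inf(P)=\inf\{f(x): f_t(x)\le0\ \forall t\in T\}$. Let $h:=\sup_{t\in T} f_t$ and $\Delta_1 := \operatorname{dom} f\cap\operatorname{dom} h$. Assume the strong Slater condition: there exist $\alpha>0$ and $a\in\operatorname{dom} f$ such that $f_t(a)\le-\alpha$ for all $t\in T$. Then the supremum over $s\ge 0$ below is attained and $$\inf(P)=\max_{s\ge0}\inf_{x\in\Delta_1}\big(f(x)+s\,h(x)\big)=\lim_{\varepsilon\downarrow0}\inf\{f(x): f_t(x)\le\varepsilon \text{ for all } t\in T\}.$$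
   Context: $\operatorname{dom} g := \{x : g(x)<+\infty\}$; a proper function never takes the value $-\infty$ and has nonempty domain. Convention: $\inf\emptyset=+\infty$. *)

theory Defs
  imports "HOL-Analysis.Analysis"
begin

definition ereal_convex :: "('a::real_vector \<Rightarrow> ereal) \<Rightarrow> bool" where
  "ereal_convex g \<longleftrightarrow> convex {(x, r::real). g x \<le> ereal r}"

definition ereal_proper :: "('a \<Rightarrow> ereal) \<Rightarrow> bool" where
  "ereal_proper g \<longleftrightarrow> (\<forall>x. g x \<noteq> -\<infinity>) \<and> (\<exists>x. g x < \<infinity>)"

definition edom :: "('a \<Rightarrow> ereal) \<Rightarrow> 'a set" where
  "edom g = {x. g x < \<infinity>}"

end

theory Submission
  imports Defs
begin

text \<open>Replacing the family of constraints by the single convex constraint \<open>h = sup\<^sub>t f\<^sub>t \<le> 0\<close>,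
  the perturbation function \<open>v(\<epsilon>) = inf {f x | h x \<le> \<epsilon>}\<close> dominates \<open>v(0) - s \<epsilon>\<close> as soon as
  \<open>s \<ge> 0\<close> is a Lagrange multiplier, i.e. \<open>v(0) \<le> f + s h\<close> on \<open>dom f \<inter> dom h\<close>; this gives both
  strong duality with attainment and the continuity of \<open>v\<close> at \<open>0\<close> from the right.
  The multiplier exists by Slater's condition: along a segment from a Slater point \<open>a\<close>
  (with \<open>h a < 0\<close>) to a point \<open>y\<close> with \<open>h y > 0\<close> there is a feasible point, and convexity
  of \<open>f\<close> there bounds every slope \<open>(v(0) - f y) / h y\<close> by \<open>(f a - v(0)) / (- h a)\<close>;
  the supremum of these slopes is a multiplier.\<close>

definition perturbed_value :: "('a \<Rightarrow> ereal) \<Rightarrow> ('a \<Rightarrow> ereal) \<Rightarrow> real \<Rightarrow> ereal" where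
  "perturbed_value f h \<epsilon> = (INF x\<in>{x. h x \<le> ereal \<epsilon>}. f x)"

definition lagrangian_dual :: "('a \<Rightarrow> ereal) \<Rightarrow> ('a \<Rightarrow> ereal) \<Rightarrow> real \<Rightarrow> ereal" where
  "lagrangian_dual f h s = (INF x\<in>edom f \<inter> edom h. f x + ereal s * h x)"

lemma ereal_convexD:
  assumes "ereal_convex g" "g x \<le> ereal u" "g y \<le> ereal v" "0 \<le> l" "l \<le> 1"
  shows "g (l *\<^sub>R x + (1 - l) *\<^sub>R y) \<le> ereal (l * u + (1 - l) * v)"
proof -
  have "l *\<^sub>R (x, u) + (1 - l) *\<^sub>R (y, v) \<in> {(x, r::real). g x \<le> ereal r}"
    using assms unfolding ereal_convex_def by (intro convexD) auto
  then show ?thesis by simp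
qed

lemma ereal_convex_SUP:
  assumes "\<And>t. t \<in> T \<Longrightarrow> ereal_convex (g t)"
  shows "ereal_convex (\<lambda>x. SUP t\<in>T. g t x)"
proof -
  have "{(x, r::real). (SUP t\<in>T. g t x) \<le> ereal r} = (\<Inter>t\<in>T. {(x, r). g t x \<le> ereal r})"
    by (auto simp: SUP_le_iff)
  then show ?thesis
    using assms unfolding ereal_convex_def by (simp add: convex_INT)
qed

lemma ereal_proper_SUP:
  assumes "t\<^sub>0 \<in> T" "ereal_proper (g t\<^sub>0)" "(SUP t\<in>T. g t a) < \<infinity>"
  shows "ereal_proper (\<lambda>x. SUP t\<in>T. g t x)"
proof -
  have "g t\<^sub>0 x \<le> (SUP t\<in>T. g t x)" for x
    using assms(1) by (rule SUP_upper)
  then show ?thesis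
    using assms(2,3) unfolding ereal_proper_def by (metis ereal_infty_less_eq(2))
qed

lemma segment_slope_bound:
  fixes F H :: "'a \<Rightarrow> real"
  assumes lower: "\<And>x y l. x \<in> D \<Longrightarrow> y \<in> D \<Longrightarrow> 0 \<le> l \<Longrightarrow> l \<le> 1 \<Longrightarrow>
      l * H x + (1 - l) * H y \<le> 0 \<Longrightarrow> p \<le> l * F x + (1 - l) * F y"
    and x: "x \<in> D" "H x < 0" and y: "y \<in> D" "H y > 0"
  shows "(p - F y) / H y \<le> (F x - p) / (- H x)"
proof -
  define l where "l = H y / (H y - H x)"
  have d: "H y - H x > 0"
    using x y by simp
  have l01: "0 \<le> l" "l \<le> 1"
    using x y d unfolding l_def by (auto simp: field_simps)
  have dl: "(H y - H x) * l = H y" and dl1: "(H y - H x) * (1 - l) = - H x"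
    using d unfolding l_def by (simp_all add: field_simps)
  have "l * H x + (1 - l) * H y = 0"
    using d unfolding l_def by (simp add: field_simps)
  then have "p \<le> l * F x + (1 - l) * F y"
    using lower[OF x(1) y(1) l01] by simp
  then have "(H y - H x) * p \<le> (H y - H x) * (l * F x + (1 - l) * F y)"
    using d by (simp add: mult_left_mono)
  also have "\<dots> = ((H y - H x) * l) * F x + ((H y - H x) * (1 - l)) * F y"
    by (simp only: distrib_left mult.assoc)
  finally have "p * (H y - H x) \<le> H y * F x - H x * F y"
    unfolding dl dl1 by (simp add: mult.commute)
  then show ?thesis
    using x y by (simp add: field_simps)
qed

lemma lagrange_multiplier_exists:
  fixes F H :: "'a \<Rightarrow> real"
  assumes lower: "\<And>x y l. x \<in> D \<Longrightarrow> y \<in> D \<Longrightarrow> 0 \<le> l \<Longrightarrow> l \<le> 1 \<Longrightarrow>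
      l * H x + (1 - l) * H y \<le> 0 \<Longrightarrow> p \<le> l * F x + (1 - l) * F y"
    and slater: "a \<in> D" "H a < 0"
  shows "\<exists>s\<ge>0. \<forall>x\<in>D. p \<le> F x + s * H x"
proof -
  have feasible: "p \<le> F x" if "x \<in> D" "H x \<le> 0" for x
    using lower[OF that(1) that(1), of 1] that by simp
  define S where "S = insert 0 ((\<lambda>y. (p - F y) / H y) ` {y\<in>D. H y > 0})"
  have "\<forall>z\<in>S. z \<le> max 0 ((F a - p) / (- H a))"
    unfolding S_def using segment_slope_bound[where D=D and F=F and H=H and p=p, OF lower slater]
    by (auto simp: le_max_iff_disj)
  then have bdd: "bdd_above S"
    by (auto simp: bdd_above_def)
  have "p \<le> F x + Sup S * H x" if x: "x \<in> D" for x
  proof (cases "H x" "0::real" rule: linorder_cases)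
    case less
    have "Sup S \<le> (F x - p) / (- H x)"
      using feasible[OF x] less divide_nonneg_pos[of "F x - p" "- H x"] segment_slope_bound[where D=D and F=F and H=H and p=p, OF lower x less]
      by (intro cSup_least) (auto simp: S_def)
    then show ?thesis
      using less by (simp add: field_simps)
  next
    case equal
    then show ?thesis
      using feasible[OF x] by simp
  next
    case greater
    have "(p - F x) / H x \<le> Sup S"
      using x greater by (intro cSup_upper[OF _ bdd]) (auto simp: S_def)
    then show ?thesis
      using greater by (simp add: field_simps)
  qed
  moreover have "0 \<le> Sup S"
    by (rule cSup_upper[OF _ bdd]) (simp add: S_def)
  ultimately show ?thesis
    by blast
qed

lemma perturbed_value_antimono:
  "\<epsilon> \<le> \<epsilon>' \<Longrightarrow> perturbed_value f h \<epsilon>' \<le> perturbed_value f h \<epsilon>"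
  unfolding perturbed_value_def by (intro INF_superset_mono) (auto intro: order_trans)

lemma lagrangian_dual_le_perturbed_value:
  assumes "0 \<le> s"
  shows "lagrangian_dual f h s \<le> perturbed_value f h 0"
  unfolding perturbed_value_def
proof (rule INF_greatest)
  fix x
  assume "x \<in> {x. h x \<le> ereal 0}"
  then have hx: "h x \<le> 0"
    by (simp add: zero_ereal_def)
  show "lagrangian_dual f h s \<le> f x"
  proof (cases "f x = \<infinity>")
    case False
    then have "x \<in> edom f \<inter> edom h"
      using hx unfolding edom_def by (auto simp: less_top)
    then have "lagrangian_dual f h s \<le> f x + ereal s * h x"
      unfolding lagrangian_dual_def by (rule INF_lower)
    also have "\<dots> \<le> f x"
      using ereal_mult_left_mono[OF hx, of "ereal s"] assms add_left_mono[of _ 0 "f x"] by simp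
    finally show ?thesis .
  qed simp
qed

lemma lagrange_multiplier_lower_bound:
  assumes "0 \<le> s" "0 \<le> \<epsilon>"
    and multiplier: "\<forall>x\<in>edom f \<inter> edom h. perturbed_value f h 0 \<le> f x + ereal s * h x"
  shows "perturbed_value f h 0 - ereal (s * \<epsilon>) \<le> perturbed_value f h \<epsilon>"
  unfolding perturbed_value_def[of f h \<epsilon>]
proof (rule INF_greatest)
  fix x
  assume "x \<in> {x. h x \<le> ereal \<epsilon>}"
  then have hx: "h x \<le> ereal \<epsilon>"
    by simp
  show "perturbed_value f h 0 - ereal (s * \<epsilon>) \<le> f x"
  proof (cases "f x = \<infinity>")
    case False
    then have "x \<in> edom f \<inter> edom h"
      using hx unfolding edom_def by (auto simp: less_top)
    then have "perturbed_value f h 0 \<le> f x + ereal s * h x"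
      using multiplier by blast
    also have "\<dots> \<le> f x + ereal (s * \<epsilon>)"
      using ereal_mult_left_mono[OF hx, of "ereal s"] assms(1) by (simp add: add_left_mono)
    finally show ?thesis
      by (simp add: ereal_minus_le)
  qed simp
qed

lemma perturbed_value_tendsto:
  assumes "0 \<le> s"
    and multiplier: "\<forall>x\<in>edom f \<inter> edom h. perturbed_value f h 0 \<le> f x + ereal s * h x"
  shows "(perturbed_value f h \<longlongrightarrow> perturbed_value f h 0) (at_right 0)"
proof (rule tendsto_sandwich)
  have "((\<lambda>\<epsilon>. perturbed_value f h 0 - ereal (s * \<epsilon>)) \<longlongrightarrow> perturbed_value f h 0 - ereal (s * 0))
      (at_right 0)"
    by (intro tendsto_intros) auto
  then show "((\<lambda>\<epsilon>. perturbed_value f h 0 - ereal (s * \<epsilon>)) \<longlongrightarrow> perturbed_value f h 0) (at_right 0)"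
    by simp
  show "\<forall>\<^sub>F \<epsilon> in at_right 0. perturbed_value f h 0 - ereal (s * \<epsilon>) \<le> perturbed_value f h \<epsilon>"
    using lagrange_multiplier_lower_bound[OF assms(1) _ multiplier]
    by (auto simp: eventually_at_right_field intro!: exI[of _ 1])
  show "\<forall>\<^sub>F \<epsilon> in at_right 0. perturbed_value f h \<epsilon> \<le> perturbed_value f h 0"
    by (auto simp: eventually_at_right_field intro!: exI[of _ 1] perturbed_value_antimono)
qed simp

lemma ereal_lagrange_multiplier_exists:
  fixes f h :: "'a::real_vector \<Rightarrow> ereal"
  assumes "ereal_convex f" "ereal_proper f" "ereal_convex h" "ereal_proper h"
    and slater: "a \<in> edom f" "h a < 0"
  shows "\<exists>s\<ge>0. \<forall>x\<in>edom f \<inter> edom h. perturbed_value f h 0 \<le> f x + ereal s * h x"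
proof (cases "perturbed_value f h 0 = -\<infinity>")
  case False
  define D where "D = edom f \<inter> edom h"
  have finite_on_D: "f x = ereal (real_of_ereal (f x))" "h x = ereal (real_of_ereal (h x))"
    if "x \<in> D" for x
    using that assms(2,4) unfolding D_def edom_def ereal_proper_def by (auto simp: ereal_real)
  have "a \<in> D"
    using slater unfolding D_def edom_def by auto
  have "perturbed_value f h 0 \<le> f a"
    using slater(2) unfolding perturbed_value_def by (intro INF_lower) (simp add: zero_ereal_def)
  then obtain p where p: "perturbed_value f h 0 = ereal p"
    using False slater(1) unfolding edom_def by (cases "perturbed_value f h 0") auto
  have "\<exists>s\<ge>0. \<forall>x\<in>D. p \<le> real_of_ereal (f x) + s * real_of_ereal (h x)"
  proof (rule lagrange_multiplier_exists[OF _ \<open>a \<in> D\<close>])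
    show "real_of_ereal (h a) < 0"
      using slater(2) assms(4) unfolding ereal_proper_def by (cases "h a") auto
  next
    fix x y and l :: real
    assume xy: "x \<in> D" "y \<in> D" "0 \<le> l" "l \<le> 1"
      and feasible: "l * real_of_ereal (h x) + (1 - l) * real_of_ereal (h y) \<le> 0"
    define z where "z = l *\<^sub>R x + (1 - l) *\<^sub>R y"
    have "h z \<le> ereal (l * real_of_ereal (h x) + (1 - l) * real_of_ereal (h y))"
      unfolding z_def using assms(3) xy finite_on_D(2)[OF xy(1)] finite_on_D(2)[OF xy(2)]
      by (intro ereal_convexD) auto
    then have "ereal p \<le> f z"
      using feasible unfolding p[symmetric] perturbed_value_def
      by (intro INF_lower) (auto simp: zero_ereal_def intro: order_trans)
    also have "f z \<le> ereal (l * real_of_ereal (f x) + (1 - l) * real_of_ereal (f y))"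
      unfolding z_def using assms(1) xy finite_on_D(1)[OF xy(1)] finite_on_D(1)[OF xy(2)]
      by (intro ereal_convexD) auto
    finally show "p \<le> l * real_of_ereal (f x) + (1 - l) * real_of_ereal (f y)"
      by simp
  qed
  then obtain s where "0 \<le> s" and s: "\<forall>x\<in>D. p \<le> real_of_ereal (f x) + s * real_of_ereal (h x)"
    by blast
  have "ereal p \<le> f x + ereal s * h x" if "x \<in> D" for x
    using s that by (subst finite_on_D(1)[OF that], subst finite_on_D(2)[OF that]) simp
  then show ?thesis
    unfolding p D_def using \<open>0 \<le> s\<close> by blast
qed auto

lemma slater_strong_duality:
  fixes f h :: "'a::real_vector \<Rightarrow> ereal"
  assumes "ereal_convex f" "ereal_proper f" "ereal_convex h" "ereal_proper h"
    and slater: "a \<in> edom f" "h a < 0"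
  shows "\<exists>s\<^sub>0\<ge>0. lagrangian_dual f h s\<^sub>0 = (SUP s\<in>{0..}. lagrangian_dual f h s)"
    and "perturbed_value f h 0 = (SUP s\<in>{0..}. lagrangian_dual f h s)"
    and "(perturbed_value f h \<longlongrightarrow> perturbed_value f h 0) (at_right 0)"
proof -
  obtain s\<^sub>0 where "0 \<le> s\<^sub>0"
    and multiplier: "\<forall>x\<in>edom f \<inter> edom h. perturbed_value f h 0 \<le> f x + ereal s\<^sub>0 * h x"
    using ereal_lagrange_multiplier_exists[OF assms] by blast
  have "perturbed_value f h 0 \<le> lagrangian_dual f h s\<^sub>0"
    using multiplier unfolding lagrangian_dual_def by (blast intro: INF_greatest)
  then have dual_attained: "lagrangian_dual f h s\<^sub>0 = perturbed_value f h 0"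
    using lagrangian_dual_le_perturbed_value[OF \<open>0 \<le> s\<^sub>0\<close>] by (rule antisym[rotated])
  show strong_duality: "perturbed_value f h 0 = (SUP s\<in>{0..}. lagrangian_dual f h s)"
    using \<open>0 \<le> s\<^sub>0\<close> dual_attained
    by (intro antisym SUP_least) (auto intro: lagrangian_dual_le_perturbed_value SUP_upper2)
  show "\<exists>s\<^sub>0\<ge>0. lagrangian_dual f h s\<^sub>0 = (SUP s\<in>{0..}. lagrangian_dual f h s)"
    using \<open>0 \<le> s\<^sub>0\<close> dual_attained strong_duality by auto
  show "(perturbed_value f h \<longlongrightarrow> perturbed_value f h 0) (at_right 0)"
    by (rule perturbed_value_tendsto[OF \<open>0 \<le> s\<^sub>0\<close> multiplier])
qed

theorem proposition3p2:
  fixes f :: "'a::real_vector \<Rightarrow> ereal"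
    and ft :: "'t \<Rightarrow> 'a \<Rightarrow> ereal"
    and T :: "'t set"
  assumes "infinite T"
    and "ereal_convex f" and "ereal_proper f"
    and "\<And>t. t \<in> T \<Longrightarrow> ereal_convex (ft t) \<and> ereal_proper (ft t)"
    and "\<exists>\<alpha>>0. \<exists>a\<in>edom f. \<forall>t\<in>T. ft t a \<le> ereal (-\<alpha>)"
  shows "let h = (\<lambda>x. SUP t\<in>T. ft t x);
             \<Delta>\<^sub>1 = edom f \<inter> edom h;
             infP = (INF x\<in>{x. \<forall>t\<in>T. ft t x \<le> 0}. f x);
             L = (\<lambda>s::real. INF x\<in>\<Delta>\<^sub>1. f x + ereal s * h x)
         in (\<exists>s0\<ge>0. L s0 = (SUP s\<in>{0..}. L s))
            \<and> infP = (SUP s\<in>{0..}. L s)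
            \<and> ((\<lambda>\<epsilon>::real. INF x\<in>{x. \<forall>t\<in>T. ft t x \<le> ereal \<epsilon>}. f x) \<longlongrightarrow> infP) (at_right 0)"
proof -
  define h where "h = (\<lambda>x. SUP t\<in>T. ft t x)"
  obtain \<alpha> a where "\<alpha> > 0" "a \<in> edom f" and slater: "\<forall>t\<in>T. ft t a \<le> ereal (-\<alpha>)"
    using assms(5) by blast
  have "h a \<le> ereal (-\<alpha>)"
    unfolding h_def using slater by (simp add: SUP_le_iff)
  also have "\<dots> < 0"
    using \<open>\<alpha> > 0\<close> by (simp add: zero_ereal_def)
  finally have "h a < 0" .
  obtain t\<^sub>0 where "t\<^sub>0 \<in> T" \<comment> \<open>the only use of \<open>infinite T\<close>\<close>
    using assms(1) by fastforce
  have "ereal_convex h"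
    using assms(4) unfolding h_def by (auto intro: ereal_convex_SUP)
  have "ereal_proper h"
    using assms(4) \<open>t\<^sub>0 \<in> T\<close> \<open>h a < 0\<close> unfolding h_def
    by (intro ereal_proper_SUP[where a=a]) auto
  have "{x. \<forall>t\<in>T. ft t x \<le> e} = {x. h x \<le> e}" for e
    unfolding h_def by (simp add: SUP_le_iff)
  then show ?thesis
    using slater_strong_duality[OF assms(2,3) \<open>ereal_convex h\<close> \<open>ereal_proper h\<close> \<open>a \<in> edom f\<close> \<open>h a < 0\<close>]
    unfolding Let_def perturbed_value_def lagrangian_dual_def h_def[symmetric]
    by (simp add: zero_ereal_def)
qed

end
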